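(* Let $n\ge 1$ and $m\ge 2$ be integers with $m\nmid n$, and let $\chi_{n,m}\colon\mathbb{F}_2^n\to\mathbb{F}_2^n$ be given by $\chi_{n,m}(x)=y$ with $y_i=x_i+x_{i+m}(x_{i+m-1}+1)(x_{i+m-2}+1)\cdots(x_{i+1}+1)$ for $i\in\{0,\dots,n-1\}$, indices modulo $n$. Then $\chi_{n,m}$ is an involution (i.e. $\chi_{n,m}\circ\chi_{n,m}$ is the identity) if and only if $n\le 2m-1$. *)

theory Defs
  imports Main "HOL-Library.Z2"
begin

text \<open>Vectors in F_2^n are represented as functions nat => bit (bit is the
  two-element field from HOL-Library.Z2) whose values at indices >= n are 0.\<close>

definition vecs :: "nat \<Rightarrow> (nat \<Rightarrow> bit) set" where
  "vecs n = {x. \<forall>i\<ge>n. x i = 0}"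

definition chi :: "nat \<Rightarrow> nat \<Rightarrow> (nat \<Rightarrow> bit) \<Rightarrow> (nat \<Rightarrow> bit)" where
  "chi n m x = (\<lambda>i. if i < n then
       x i + x ((i + m) mod n) * (\<Prod>j\<in>{1..<m}. (x ((i + j) mod n) + 1))
     else 0)"

end

theory Submission
  imports Defs
begin

text \<open>\<open>\<chi>\<close> adds 1 to \<open>x_i\<close> exactly when the window \<open>x_(i+1), \<dots>, x_(i+m)\<close> reads
  \<open>0\<dots>01\<close>, so \<open>\<chi> \<circ> \<chi> = id\<close> as soon as \<open>\<chi>\<close> neither creates nor destroys such
  windows. For \<open>n < m\<close> no window exists, since its index \<open>i + m - n\<close> coincides with
  \<open>i + m\<close> modulo \<open>n\<close>. For \<open>m < n < 2 m\<close> two windows cannot start at distance at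
  most \<open>m\<close>, so no coordinate read by a window is flipped and all windows survive. For
  \<open>n > 2 m\<close> the vector with ones at \<open>m\<close> and \<open>2 m\<close> has windows at \<open>0\<close> and \<open>m\<close>;
  flipping \<open>x_m\<close> destroys the window at \<open>0\<close>, so \<open>\<chi> (\<chi> x)\<close> differs from \<open>x\<close> at \<open>0\<close>.\<close>

lemma prod_bit_eq_of_bool:
  "finite A \<Longrightarrow> (\<Prod>j\<in>A. g j) = (of_bool (\<forall>j\<in>A. g j = 1) :: bit)"
  by (induction A rule: finite_induct) auto

lemma bit_add_twice: "a + b + b = (a :: bit)"
  by (metis add.assoc add_diff_cancel_left' add.right_neutral minus_bit_def)

definition chi_flip :: "nat \<Rightarrow> nat \<Rightarrow> (nat \<Rightarrow> bit) \<Rightarrow> nat \<Rightarrow> bool" where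
  "chi_flip n m x i \<longleftrightarrow> (\<forall>j\<in>{1..<m}. x ((i + j) mod n) = 0) \<and> x ((i + m) mod n) = 1"

lemma chi_flipD:
  assumes "chi_flip n m x i"
  shows chi_flip_zero: "j \<in> {1..<m} \<Longrightarrow> x ((i + j) mod n) = 0"
    and chi_flip_one: "x ((i + m) mod n) = 1"
  using assms by (simp_all add: chi_flip_def)

lemma chi_apply: "chi n m x i = (if i < n then x i + of_bool (chi_flip n m x i) else 0)"
proof -
  have "x ((i + j) mod n) + 1 = 1 \<longleftrightarrow> x ((i + j) mod n) = 0" for j
    by (metis add.commute add_cancel_right_right)
  then show ?thesis
    by (auto simp: chi_def chi_flip_def prod_bit_eq_of_bool)
qed

lemma chi_chi_eq_if_flips_preserved:
  assumes "x \<in> vecs n" and "\<And>i. i < n \<Longrightarrow> chi_flip n m (chi n m x) i = chi_flip n m x i"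
  shows "chi n m (chi n m x) = x"
proof
  fix i
  show "chi n m (chi n m x) i = x i"
  proof (cases "i < n")
    case True
    then have "chi n m (chi n m x) i = x i + of_bool (chi_flip n m x i) + of_bool (chi_flip n m x i)"
      using assms(2) by (simp only: chi_apply if_True)
    then show ?thesis
      by (simp only: bit_add_twice)
  next
    case False
    then show ?thesis
      using assms(1) by (simp add: chi_apply vecs_def)
  qed
qed

lemma no_chi_flip_if_less:
  assumes "0 < n" and "n < m"
  shows "\<not> chi_flip n m x i"
proof
  assume flip: "chi_flip n m x i"
  have "m - n \<in> {1..<m}"
    using assms by simp
  then have "x ((i + (m - n)) mod n) = 0"
    by (rule chi_flip_zero[OF flip])
  moreover have "(i + (m - n)) mod n = (i + m) mod n"
    using assms(2) by (metis add.assoc le_add_diff_inverse2 less_imp_le mod_add_self2)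
  ultimately show False
    using chi_flip_one[OF flip] by simp
qed

text \<open>Between two positions where \<open>\<chi>\<close> flips, the window of the first one sees the
  \<open>1\<close> of the second (for \<open>d < m\<close>), or the window of the second one wraps around to
  the \<open>1\<close> of the first (for \<open>d = m\<close>, using \<open>n < 2 m\<close>).\<close>
lemma chi_flips_far_apart:
  assumes "m < n" and "n < 2 * m" and "d \<in> {1..m}"
    and flip_i: "chi_flip n m x i" and flip_id: "chi_flip n m x ((i + d) mod n)"
  shows False
proof (cases "d < m")
  case True
  then have "x (((i + d) mod n + (m - d)) mod n) = 0"
    using assms(3) chi_flip_zero[OF flip_id, of "m - d"] by simp
  moreover have "((i + d) mod n + (m - d)) mod n = (i + d + (m - d)) mod n"
    by (simp add: mod_add_left_eq)
  moreover have "i + d + (m - d) = i + m"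
    using True by simp
  ultimately show False
    using chi_flip_one[OF flip_i] by simp
next
  case False
  then have "d = m"
    using assms(3) by simp
  then have "x (((i + d) mod n + m) mod n) = 1"
    using chi_flip_one[OF flip_id] by simp
  moreover have "((i + d) mod n + m) mod n = (i + (2 * m - n)) mod n"
  proof -
    have "((i + d) mod n + m) mod n = (i + (2 * m - n) + n) mod n"
      using \<open>d = m\<close> assms(1,2) by (simp add: mod_add_left_eq mult_2 add.assoc)
    then show ?thesis
      by simp
  qed
  moreover have "2 * m - n \<in> {1..<m}"
    using assms(1,2) by auto
  ultimately show False
    using chi_flip_zero[OF flip_i] by simp
qed

lemma chi_flip_chi_eq_if_no_flip_ahead:
  assumes "0 < n" and "0 < m" and "\<And>d. d \<in> {1..m} \<Longrightarrow> \<not> chi_flip n m x ((i + d) mod n)"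
  shows "chi_flip n m (chi n m x) i = chi_flip n m x i"
proof -
  have chi_eq: "chi n m x ((i + d) mod n) = x ((i + d) mod n)" if "d \<in> {1..m}" for d
    using assms(1,3) that by (simp add: chi_apply)
  have "\<forall>j\<in>{1..<m}. chi n m x ((i + j) mod n) = x ((i + j) mod n)"
    using chi_eq by simp
  moreover have "chi n m x ((i + m) mod n) = x ((i + m) mod n)"
    using chi_eq assms(2) by simp
  ultimately show ?thesis
    unfolding chi_flip_def by simp
qed

lemma chi_flip_chi_eq_if_between:
  assumes "m < n" and "n < 2 * m"
  shows "chi_flip n m (chi n m x) i = chi_flip n m x i"
proof -
  have n_pos: "0 < n" and m_pos: "0 < m"
    using assms by simp_all
  have flip_kept: "chi_flip n m (chi n m x) k" if flip_k: "chi_flip n m x k" for k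
  proof -
    have "\<not> chi_flip n m x ((k + d) mod n)" if "d \<in> {1..m}" for d
      using chi_flips_far_apart[OF assms that flip_k] by blast
    then show ?thesis
      using chi_flip_chi_eq_if_no_flip_ahead[OF n_pos m_pos] flip_k by simp
  qed
  show ?thesis
  proof
    assume "chi_flip n m x i"
    then show "chi_flip n m (chi n m x) i"
      by (rule flip_kept)
  next
    assume flip_chi: "chi_flip n m (chi n m x) i"
    show "chi_flip n m x i"
    proof (rule ccontr)
      assume no_flip: "\<not> chi_flip n m x i"
      obtain d where d: "d \<in> {1..m}" and flip_d: "chi_flip n m x ((i + d) mod n)"
        using chi_flip_chi_eq_if_no_flip_ahead[OF n_pos m_pos, of x i] flip_chi no_flip by blast
      from flip_d have "chi_flip n m (chi n m x) ((i + d) mod n)"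
        by (rule flip_kept)
      then show False
        using chi_flips_far_apart[OF assms d flip_chi] by blast
    qed
  qed
qed

lemma chi_chi_eq_if_less_double:
  assumes "0 < n" and "n \<noteq> m" and "n < 2 * m" and "x \<in> vecs n"
  shows "chi n m (chi n m x) = x"
proof (rule chi_chi_eq_if_flips_preserved[OF assms(4)])
  fix i
  show "chi_flip n m (chi n m x) i = chi_flip n m x i"
  proof (cases "n < m")
    case True
    then show ?thesis
      using assms(1) no_chi_flip_if_less by simp
  next
    case False
    then show ?thesis
      using assms(2,3) chi_flip_chi_eq_if_between by simp
  qed
qed

lemma chi_not_involutive_if_greater:
  assumes "0 < m" and "2 * m < n"
  shows "\<exists>x\<in>vecs n. chi n m (chi n m x) \<noteq> x"
proof
  define x :: "nat \<Rightarrow> bit" where "x = (\<lambda>i. of_bool (i = m \<or> i = 2 * m))"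
  show "x \<in> vecs n"
    using assms(2) by (simp add: x_def vecs_def)
  have "chi_flip n m x 0" and "chi_flip n m x m"
    using assms by (auto simp: chi_flip_def x_def)
  then have "chi n m x 0 = 1" and "chi n m x m = 0"
    using assms by (simp_all add: chi_apply x_def)
  then have "\<not> chi_flip n m (chi n m x) 0"
    using assms(2) by (simp add: chi_flip_def)
  then have "chi n m (chi n m x) 0 = 1"
    using \<open>chi n m x 0 = 1\<close> assms(2) by (simp add: chi_apply)
  moreover have "x 0 = 0"
    using assms(1) by (simp add: x_def)
  ultimately show "chi n m (chi n m x) \<noteq> x"
    by (metis zero_neq_one)
qed

theorem corollary3:
  fixes n m :: nat
  assumes "n \<ge> 1" and "m \<ge> 2" and "\<not> m dvd n"
  shows "(\<forall>x\<in>vecs n. chi n m (chi n m x) = x) \<longleftrightarrow> n \<le> 2 * m - 1"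
proof
  assume "n \<le> 2 * m - 1"
  moreover have "n \<noteq> m"
    using assms(3) by auto
  ultimately show "\<forall>x\<in>vecs n. chi n m (chi n m x) = x"
    using assms(1,2) chi_chi_eq_if_less_double by simp
next
  assume involutive: "\<forall>x\<in>vecs n. chi n m (chi n m x) = x"
  show "n \<le> 2 * m - 1"
  proof (rule ccontr)
    assume "\<not> n \<le> 2 * m - 1"
    moreover have "n \<noteq> 2 * m"
      using assms(3) by auto
    ultimately have "2 * m < n"
      by linarith
    then show False
      using chi_not_involutive_if_greater[of m n] assms(2) involutive by auto
  qed
qed

end
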